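(* We have $\alpha_0(z)=e^z-(z+1)$. For every $k\ge1$ there are polynomials $p_m^{(k)}(z)\in\mathbb Q[z]$, $1\le m\le k$, such that \[ \alpha_k(z)=\frac{(k+1)^k}{(k+1)!}e^{(k+1)z}+e^z\sum_{m=1}^k(-1)^m p_m^{(k)}(z)\,e^{(k-m)z}, \] and each $p_m^{(k)}$ has degree exactly $2m$ and positive leading coefficient.
   Context: For $n\ge3$ and $k\ge0$, $a_{k,n}=\operatorname{rk}H^{2k}(\overline{\mathcal M}_{0,n},\mathbb Q)$ is the coefficient of $t^k$ in $P_n(t)$, where $P_3(t)=1$ and, for $n>3$, $P_n(t)=P_{n-1}(t)(1+t)+t\sum_{i=3}^{n-2}\binom{n-2}{i-1}P_i(t)P_{n+1-i}(t)$ (so that $[\overline{\mathcal M}_{0,n}]=P_n(\mathbb L)$ in the Grothendieck ring of varieties). Define the generating function $\alpha_k(z)=\sum_{n\ge3}a_{k,n}\frac{z^{n-1}}{(n-1)!}$. *)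

theory Defs
  imports "HOL-Computational_Algebra.Computational_Algebra"
begin

text \<open>P n is the Poincare polynomial of the moduli space M_{0,n}-bar (only n >= 3 is meaningful;
  we set P n = 1 for n <= 3).\<close>
fun P :: "nat \<Rightarrow> int poly" where
  "P n = (if n \<le> 3 then 1
          else P (n - 1) * [:1, 1:]
             + [:0, 1:] * (\<Sum>i\<in>{3..n-2}.
                  smult (int ((n - 2) choose (i - 1))) (P i * P (n + 1 - i))))"

declare P.simps[simp del]

definition a :: "nat \<Rightarrow> nat \<Rightarrow> int" where
  "a k n = coeff (P n) k"

text \<open>alpha k = sum_{n>=3} a_{k,n} z^{n-1}/(n-1)!, as a formal power series over Q:
  the coefficient of z^j is a_{k,j+1}/j! when j+1 >= 3, and 0 otherwise.\<close>
definition alpha :: "nat \<Rightarrow> rat fps" where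
  "alpha k = Abs_fps (\<lambda>j. if 3 \<le> j + 1 then of_int (a k (j + 1)) / fact j else 0)"

end

theory Submission
  imports Defs
begin

text \<open>The recursion for P_n turns into the differential equation
  alpha_k' - alpha_k = alpha_(k-1) + sum_(u<k) alpha_u' alpha_(k-1-u).
  By induction on k, alpha_k = sum_(j<=k+1) q_j(z) e^(jz), where q_0 = 0, q_(k+1) is the constant
  c_k = (k+1)^k/(k+1)!, and for 1 <= j <= k the polynomial q_j has degree exactly 2(k+1-j) and
  leading coefficient of sign (-1)^(k+1-j). The right-hand side of the equation has the same
  shape, because the top-degree parts of all products in it carry the same sign. Solving
  y' - y = r coefficientwise means y_j' + (j-1) y_j = r_j: for j >= 2 this preserves degree and
  sign, for j = 1 it is an integration raising the degree by one, and the free constant is fixed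
  by alpha_k(0) = 0. The top constants obey k c_k = sum_(i<k) (i+1) c_i c_(k-1-i), which is
  Abel's identity sum_m (N choose m) m^(m-1) (N-m)^(N-m) = N^N for N = k+1.\<close>

section \<open>Abel's identity\<close>

lemma pderiv_sum: "pderiv (sum f A) = (\<Sum>x\<in>A. pderiv (f x))"
  by (induction A rule: infinite_finite_induct) (simp_all add: pderiv_add)

lemma smult_sum_right: "smult c (sum f A) = (\<Sum>x\<in>A. smult c (f x))"
  by (induction A rule: infinite_finite_induct) (simp_all add: smult_add_right)

lemma alternating_binomial_sum_Suc:
  fixes f :: "nat \<Rightarrow> 'a::comm_ring_1"
  shows "(\<Sum>m\<le>Suc N. (-1)^m * of_nat (Suc N choose m) * f m)
       = (\<Sum>m\<le>N. (-1)^m * of_nat (N choose m) * (f m - f (Suc m)))"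
proof -
  define g where "g m = (-1)^m * of_nat (N choose Suc m) * f (Suc m)" for m
  define h where "h m = (-1)^m * of_nat (N choose m) * f (Suc m)" for m
  have shift: "(\<Sum>m\<le>Suc N. (-1)^m * of_nat (Suc N choose m) * f m)
      = f 0 - (\<Sum>m\<le>N. h m) - (\<Sum>m\<le>N. g m)"
    by (subst sum.atMost_Suc_shift)
       (simp add: g_def h_def sum_subtractf[symmetric] sum.distrib[symmetric] algebra_simps)
  have top: "(\<Sum>m\<le>N. g m) = (\<Sum>m<N. g m)"
    by (simp add: g_def lessThan_Suc_atMost[symmetric] binomial_eq_0)
  have "(\<Sum>m\<le>N. (-1)^m * of_nat (N choose m) * f m) = f 0 - (\<Sum>m<N. g m)"
    unfolding lessThan_Suc_atMost[symmetric] sum.lessThan_Suc_shift by (simp add: g_def sum_negf)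
  then show ?thesis
    unfolding shift top right_diff_distrib sum_subtractf h_def by (simp add: algebra_simps)
qed

lemma degree_diff_pcompose_shift_less:
  fixes p :: "'a::idom poly"
  assumes "degree p > 0"
  shows "degree (p - p \<circ>\<^sub>p [:1, 1:]) < degree p"
proof (cases "p - p \<circ>\<^sub>p [:1, 1:] = 0")
  case False
  have deg: "degree (p \<circ>\<^sub>p [:1, 1:]) = degree p"
    by (simp add: degree_pcompose)
  moreover have "lead_coeff (p \<circ>\<^sub>p [:1, 1:]) = lead_coeff p"
    by (simp add: lead_coeff_comp)
  ultimately have "coeff (p - p \<circ>\<^sub>p [:1, 1:]) (degree p) = 0"
    by (metis coeff_diff diff_self)
  then show ?thesis
    using False deg by (intro degree_less_if_less_eqI) (auto intro: degree_diff_le)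
qed (use assms in simp)

lemma alternating_binomial_sum_poly:
  fixes p :: "'a::idom poly"
  assumes "degree p < N"
  shows "(\<Sum>m\<le>N. (-1)^m * of_nat (N choose m) * poly p (of_nat m)) = 0"
  using assms
proof (induction N arbitrary: p)
  case (Suc N)
  define q where "q = p - p \<circ>\<^sub>p [:1, 1:]"
  have "(\<Sum>m\<le>Suc N. (-1)^m * of_nat (Suc N choose m) * poly p (of_nat m))
      = (\<Sum>m\<le>N. (-1)^m * of_nat (N choose m) * poly q (of_nat m))"
    unfolding alternating_binomial_sum_Suc q_def by (simp add: poly_pcompose algebra_simps)
  also have "\<dots> = 0"
  proof (cases "degree p = 0")
    case True
    then obtain c where "p = [:c:]" by (metis degree_eq_zeroE)
    then show ?thesis by (simp add: q_def)
  next
    case False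
    then show ?thesis
      using degree_diff_pcompose_shift_less[of p] Suc by (intro Suc.IH) (simp add: q_def)
  qed
  finally show ?case .
qed simp

text \<open>Abel's identity is the value at x = 0, s = 0 of the polynomial identity
  sum_(m=1..N) (N choose m) m^(m-1) (x + s + N - m)^(N-m) = N (x + s + N)^(N-1).
  Both sides have derivative N times the case (N - 1, s + 1), and at x = -(s + N) the left-hand
  side is an N-th finite difference of a polynomial of degree N - 1, hence 0.\<close>

definition abel_sum_poly :: "nat \<Rightarrow> 'a::field_char_0 \<Rightarrow> 'a poly" where
  "abel_sum_poly N s =
     (\<Sum>m=1..N. smult (of_nat ((N choose m) * m^(m-1))) ([:s + of_nat (N-m), 1:]^(N-m)))"

definition abel_closed_poly :: "nat \<Rightarrow> 'a::field_char_0 \<Rightarrow> 'a poly" where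
  "abel_closed_poly N s = smult (of_nat N) ([:s + of_nat N, 1:]^(N-1))"

lemma pderiv_linear_power: "pderiv ([:c, 1:]^n) = smult (of_nat n) ([:c, 1:]^(n-1))"
  by (simp add: pderiv_power pderiv_pCons)

lemma pderiv_abel_sum_poly:
  "pderiv (abel_sum_poly (Suc n) s) = smult (of_nat (Suc n)) (abel_sum_poly n (s + 1))"
proof -
  define t where "t m = smult (of_nat ((Suc n choose m) * m^(m-1) * (Suc n - m)))
      ([:s + of_nat (Suc n - m), 1:]^(Suc n - m - 1))" for m
  have "pderiv (abel_sum_poly (Suc n) s) = (\<Sum>m=1..Suc n. t m)"
    unfolding abel_sum_poly_def t_def
    by (simp only: pderiv_sum pderiv_smult pderiv_linear_power smult_smult of_nat_mult)
  also have "\<dots> = (\<Sum>m=1..n. t m)"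
    by (rule sum.mono_neutral_right) (auto simp: t_def le_Suc_eq)
  also have "\<dots> = smult (of_nat (Suc n)) (abel_sum_poly n (s + 1))"
    unfolding abel_sum_poly_def smult_sum_right
  proof (rule sum.cong[OF refl])
    fix m assume m: "m \<in> {1..n}"
    have "(Suc n - m) * (Suc n choose m) = Suc n * (n choose m)"
      using binomial_absorb_comp[of "Suc n" m] by simp
    then have "(Suc n choose m) * m^(m-1) * (Suc n - m) = Suc n * ((n choose m) * m^(m-1))"
      by (metis mult.assoc mult.commute)
    moreover have "s + of_nat (Suc n - m) = (s + 1) + of_nat (n - m)"
      using m by (simp add: of_nat_diff)
    ultimately show "t m = smult (of_nat (Suc n))
        (smult (of_nat ((n choose m) * m^(m-1))) ([:(s + 1) + of_nat (n - m), 1:]^(n - m)))"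
      using m unfolding t_def by (simp only: of_nat_mult smult_smult Suc_diff_le diff_Suc_1) simp
  qed
  finally show ?thesis .
qed

lemma pderiv_abel_closed_poly:
  "n \<ge> 1 \<Longrightarrow>
     pderiv (abel_closed_poly (Suc n) s) = smult (of_nat (Suc n)) (abel_closed_poly n (s + 1))"
  unfolding abel_closed_poly_def by (simp add: pderiv_smult pderiv_linear_power algebra_simps)

lemma poly_abel_sum_poly_root:
  assumes "N \<ge> 2"
  shows "poly (abel_sum_poly N s) (- (s + of_nat N)) = 0"
proof -
  have "poly (abel_sum_poly N s) (- (s + of_nat N)) =
      (\<Sum>m=1..N. of_nat (N choose m) * of_nat m ^ (m-1) * (- of_nat m) ^ (N-m))"
    unfolding abel_sum_poly_def poly_sum by (intro sum.cong) (auto simp: of_nat_diff)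
  also have "\<dots> = (-1)^N *
      (\<Sum>m=1..N. (-1)^m * of_nat (N choose m) * poly ([:0, 1:]^(N-1)) (of_nat m))"
    unfolding sum_distrib_left
  proof (rule sum.cong[OF refl])
    fix m assume m: "m \<in> {1..N}"
    have "(- of_nat m :: 'a) ^ (N-m) = (-1)^(N-m) * of_nat m ^ (N-m)"
      by (simp add: power_minus')
    moreover have "of_nat m ^ (m-1) * of_nat m ^ (N-m) = (of_nat m ^ (N-1) :: 'a)"
      using m by (simp add: power_add[symmetric])
    moreover have "(-1::'a)^(N-m) = (-1)^N * (-1)^m"
    proof -
      have "(-1::'a)^N = (-1)^(N-m) * (-1)^m" using m by (simp add: power_add[symmetric])
      then show ?thesis by (simp add: algebra_simps)
    qed
    ultimately show "of_nat (N choose m) * of_nat m ^ (m-1) * (- of_nat m) ^ (N-m) =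
        (-1)^N * ((-1)^m * of_nat (N choose m) * poly ([:0, 1:]^(N-1)) (of_nat m) :: 'a)"
      by (simp add: algebra_simps)
  qed
  also have "(\<Sum>m=1..N. (-1)^m * of_nat (N choose m) * poly ([:0, 1:]^(N-1)) (of_nat m :: 'a))
      = (\<Sum>m\<le>N. (-1)^m * of_nat (N choose m) * poly ([:0, 1:]^(N-1)) (of_nat m))"
    using assms by (simp add: atMost_atLeast0 sum.atLeast_Suc_atMost)
  also have "\<dots> = 0"
    using assms by (intro alternating_binomial_sum_poly) (simp add: degree_power_eq)
  finally show ?thesis by simp
qed

lemma abel_sum_poly_eq_closed: "N \<ge> 1 \<Longrightarrow> abel_sum_poly N s = abel_closed_poly N s"
proof (induction N arbitrary: s rule: nat_induct_at_least)
  case base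
  then show ?case by (simp add: abel_sum_poly_def abel_closed_poly_def)
next
  case (Suc n)
  have "pderiv (abel_sum_poly (Suc n) s - abel_closed_poly (Suc n) s) = 0"
    using Suc by (simp add: pderiv_diff pderiv_abel_sum_poly pderiv_abel_closed_poly)
  then obtain h where h: "abel_sum_poly (Suc n) s - abel_closed_poly (Suc n) s = [:h:]"
    using pderiv_iszero by blast
  have "poly (abel_sum_poly (Suc n) s - abel_closed_poly (Suc n) s) (- (s + of_nat (Suc n))) = 0"
    using poly_abel_sum_poly_root[of "Suc n" s] Suc by (simp add: abel_closed_poly_def)
  then show ?case using h by simp
qed

theorem abel_identity:
  assumes "N \<ge> 1"
  shows "(\<Sum>m=1..N. (N choose m) * m^(m-1) * (N-m)^(N-m)) = N ^ N"
proof -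
  have "poly (abel_sum_poly N 0) 0 = poly (abel_closed_poly N 0) (0::rat)"
    using abel_sum_poly_eq_closed[OF assms] by metis
  moreover have "poly (abel_sum_poly N 0) (0::rat)
      = of_nat (\<Sum>m=1..N. (N choose m) * m^(m-1) * (N-m)^(N-m))"
    unfolding abel_sum_poly_def poly_sum by simp
  moreover have "poly (abel_closed_poly N 0) (0::rat) = of_nat (N ^ N)"
    using assms unfolding abel_closed_poly_def by (simp add: power_Suc[symmetric])
  ultimately have
    "(of_nat (\<Sum>m=1..N. (N choose m) * m^(m-1) * (N-m)^(N-m)) :: rat) = of_nat (N ^ N)"
    by simp
  then show ?thesis by (simp only: of_nat_eq_iff)
qed

section \<open>The leading constants\<close>

definition exp_top_coeff :: "nat \<Rightarrow> rat" where
  "exp_top_coeff k = of_nat ((k + 1) ^ k) / fact (k + 1)"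

lemma exp_top_coeff_pos: "exp_top_coeff k > 0"
  by (simp add: exp_top_coeff_def)

lemma exp_top_coeff_convolution:
  assumes "k \<ge> 1"
  shows "of_nat k * exp_top_coeff k
    = (\<Sum>i<k. of_nat (i + 1) * exp_top_coeff i * exp_top_coeff (k - 1 - i))"
proof -
  define N where "N = Suc k"
  have "(\<Sum>m=1..k. (N choose m) * m^(m-1) * (N-m)^(N-m)) + N ^ k
      = (\<Sum>m=1..N. (N choose m) * m^(m-1) * (N-m)^(N-m))"
    unfolding N_def by (simp only: sum.cl_ivl_Suc) simp
  also have "\<dots> = N ^ N"
    using N_def by (intro abel_identity) simp
  finally have "of_nat (\<Sum>m=1..k. (N choose m) * m^(m-1) * (N-m)^(N-m)) + of_nat N ^ k
      = (of_nat N ^ N :: rat)"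
    by (metis of_nat_add of_nat_power)
  then have abel: "(\<Sum>m=1..k. of_nat ((N choose m) * m^(m-1) * (N-m)^(N-m)))
      = (of_nat N ^ N - of_nat N ^ k :: rat)"
    by (simp add: eq_diff_eq)
  have summand: "of_nat ((N choose m) * m^(m-1) * (N-m)^(N-m)) / fact N
      = of_nat (N-m) * exp_top_coeff (N-m-1) * exp_top_coeff (m-1)"
    if m: "m \<in> {1..k}" for m
  proof -
    have "N - m = Suc (N - m - 1)"
      using m N_def by (simp add: Suc_diff_le)
    then have pow: "(N-m)^(N-m) = (N-m) * (N-m)^(N-m-1)"
      by (metis power_Suc)
    have binom: "(of_nat (N choose m) :: rat) = fact N / (fact m * fact (N-m))"
      using m N_def by (intro binomial_fact) simp
    have top: "exp_top_coeff (m-1) = of_nat (m ^ (m-1)) / fact m"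
      "exp_top_coeff (N-m-1) = of_nat ((N-m) ^ (N-m-1)) / fact (N-m)"
      using m N_def by (simp_all add: exp_top_coeff_def Suc_diff_le)
    show ?thesis
      unfolding top pow of_nat_mult binom by (simp add: field_simps)
  qed
  have "of_nat N ^ N - of_nat N ^ k = (of_nat k * of_nat N ^ k :: rat)"
    by (simp add: N_def algebra_simps)
  then have "of_nat k * exp_top_coeff k = (of_nat N ^ N - of_nat N ^ k) / fact N"
    by (simp add: exp_top_coeff_def N_def)
  also have "\<dots> = (\<Sum>m=1..k. of_nat (N-m) * exp_top_coeff (N-m-1) * exp_top_coeff (m-1))"
    unfolding abel[symmetric] sum_divide_distrib by (rule sum.cong[OF refl summand])
  also have "\<dots> = (\<Sum>i<k. of_nat (i + 1) * exp_top_coeff i * exp_top_coeff (k - 1 - i))"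
    by (rule sum.reindex_bij_witness[where i="\<lambda>i. k - i" and j="\<lambda>m. k - m"]) (auto simp: N_def)
  finally show ?thesis .
qed

section \<open>The differential equation for \<open>\<alpha>\<^sub>k\<close>\<close>

lemma P_rec:
  "n > 3 \<Longrightarrow> P n = P (n - 1) * [:1, 1:]
     + [:0, 1:] * (\<Sum>i=3..n-2. smult (int ((n - 2) choose (i - 1))) (P i * P (n + 1 - i)))"
  by (subst P.simps) simp

lemma P_le_3: "n \<le> 3 \<Longrightarrow> P n = 1"
  by (subst P.simps) simp

lemma coeff_P_0: "coeff (P n) 0 = 1"
proof (induction n rule: less_induct)
  case (less n)
  then show ?case
    by (cases "n \<le> 3") (simp_all add: P_le_3 P_rec mult_pCons_right mult_pCons_left)
qed

lemma a_0: "a 0 n = 1"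
  by (simp add: a_def coeff_P_0)

lemma a_3: "k \<ge> 1 \<Longrightarrow> a k 3 = 0"
  by (simp add: a_def P_le_3)

lemma a_rec:
  assumes "n \<ge> 4" "k \<ge> 1"
  shows "a k n = a k (n-1) + a (k-1) (n-1) +
     (\<Sum>i=3..n-2. int ((n-2) choose (i-1)) * (\<Sum>u\<le>k-1. a u i * a (k-1-u) (n+1-i)))"
proof -
  obtain j where "k = Suc j" using assms by (cases k) auto
  then show ?thesis
    using assms by (simp add: a_def P_rec mult_pCons_right mult_pCons_left coeff_sum coeff_mult)
qed

definition alpha_egf :: "nat \<Rightarrow> nat \<Rightarrow> rat" where
  "alpha_egf k j = (if 2 \<le> j then of_int (a k (j + 1)) else 0)"

lemma alpha_nth: "alpha k $ j = alpha_egf k j / fact j"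
  by (simp add: alpha_def alpha_egf_def)

lemma alpha_nth_0: "alpha k $ 0 = 0"
  by (simp add: alpha_nth alpha_egf_def)

lemma alpha_0: "alpha 0 = fps_exp 1 - (fps_X + 1)"
proof (rule fps_ext)
  fix j show "alpha 0 $ j = (fps_exp 1 - (fps_X + 1)) $ j"
    by (cases j; cases "j - 1") (auto simp: alpha_nth alpha_egf_def a_0 fps_X_nth algebra_simps)
qed

lemma alpha_egf_convolution:
  "(\<Sum>m\<le>N. of_nat (N choose m) * alpha_egf u m * alpha_egf v (Suc N - m))
     = (\<Sum>i=3..N. of_nat (N choose (i-1)) * of_int (a u i * a v (N+3-i)))"
proof -
  have "(\<Sum>m\<le>N. of_nat (N choose m) * alpha_egf u m * alpha_egf v (Suc N - m))
      = (\<Sum>m=2..N-1. of_nat (N choose m) * alpha_egf u m * alpha_egf v (Suc N - m))"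
    by (rule sum.mono_neutral_right) (auto simp: alpha_egf_def)
  also have "\<dots> = (\<Sum>i=3..N. of_nat (N choose (i-1)) * of_int (a u i * a v (N+3-i)))"
    by (rule sum.reindex_bij_witness[where i="\<lambda>i. i - 1" and j="\<lambda>m. m + 1"])
       (auto simp: alpha_egf_def Suc_diff_le numeral_eq_Suc)
  finally show ?thesis .
qed

lemma alpha_egf_rec:
  assumes "k \<ge> 1"
  shows "alpha_egf k (Suc N) = alpha_egf k N + alpha_egf (k-1) N +
     (\<Sum>u<k. \<Sum>m\<le>N. of_nat (N choose m) * alpha_egf u m * alpha_egf (k-1-u) (Suc N - m))"
proof (cases "N \<ge> 2")
  case True
  have rec: "a k (N+2) = a k (N+1) + a (k-1) (N+1) +
      (\<Sum>i=3..N. int (N choose (i-1)) * (\<Sum>u\<le>k-1. a u i * a (k-1-u) (N+3-i)))"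
    using a_rec[of "N+2" k] assms True by (simp add: numeral_eq_Suc)
  have "{..k-1} = {..<k}" using assms by auto
  then have "(\<Sum>u<k. \<Sum>m\<le>N. of_nat (N choose m) * alpha_egf u m * alpha_egf (k-1-u) (Suc N - m))
      = of_int (\<Sum>i=3..N. int (N choose (i-1)) * (\<Sum>u\<le>k-1. a u i * a (k-1-u) (N+3-i)))"
    unfolding alpha_egf_convolution by (simp add: sum.swap[of _ "{..<k}"] sum_distrib_left)
  moreover have "alpha_egf k (Suc N) = of_int (a k (N+2))" "alpha_egf k N = of_int (a k (N+1))"
    "alpha_egf (k-1) N = of_int (a (k-1) (N+1))"
    using True by (simp_all add: alpha_egf_def)
  ultimately show ?thesis
    unfolding rec by simp
next
  case False
  then consider "N = 0" | "N = 1" by linarith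
  then show ?thesis
    using a_3[OF assms] by cases (simp_all add: alpha_egf_def numeral_3_eq_3)
qed

lemma fps_deriv_alpha_nth: "fps_deriv (alpha k) $ i = alpha_egf k (Suc i) / fact i"
proof -
  have "fact (Suc i) = (of_nat (Suc i) :: rat) * fact i" by simp
  then show ?thesis by (simp add: alpha_nth del: of_nat_Suc)
qed

lemma alpha_times_fps_deriv_alpha_nth:
  "(alpha u * fps_deriv (alpha v)) $ N
     = (\<Sum>m\<le>N. of_nat (N choose m) * alpha_egf u m * alpha_egf v (Suc N - m)) / fact N"
proof -
  have "(alpha u * fps_deriv (alpha v)) $ N
      = (\<Sum>m\<le>N. alpha_egf u m / fact m * (alpha_egf v (Suc N - m) / fact (N - m)))"
    by (auto simp: fps_mult_nth fps_deriv_alpha_nth alpha_nth atLeast0AtMost Suc_diff_le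
        intro!: sum.cong)
  also have "\<dots> = (\<Sum>m\<le>N. of_nat (N choose m) * alpha_egf u m * alpha_egf v (Suc N - m) / fact N)"
    by (intro sum.cong refl) (simp add: binomial_fact field_simps)
  finally show ?thesis
    by (simp add: sum_divide_distrib)
qed

lemma alpha_ode:
  assumes "k \<ge> 1"
  shows "fps_deriv (alpha k) - alpha k = alpha (k-1) + (\<Sum>u<k. fps_deriv (alpha u) * alpha (k-1-u))"
proof -
  have "fps_deriv (alpha k) - alpha k = alpha (k-1) + (\<Sum>u<k. alpha u * fps_deriv (alpha (k-1-u)))"
  proof (rule fps_ext)
    fix N
    have "(fps_deriv (alpha k) - alpha k) $ N = (alpha_egf k (Suc N) - alpha_egf k N) / fact N"
      by (simp add: fps_deriv_alpha_nth alpha_nth diff_divide_distrib)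
    also have "\<dots> = (alpha_egf (k-1) N + (\<Sum>u<k. \<Sum>m\<le>N.
        of_nat (N choose m) * alpha_egf u m * alpha_egf (k-1-u) (Suc N - m))) / fact N"
      using alpha_egf_rec[OF assms, of N] by simp
    also have "\<dots> = (alpha (k-1) + (\<Sum>u<k. alpha u * fps_deriv (alpha (k-1-u)))) $ N"
      by (simp add: fps_sum_nth alpha_times_fps_deriv_alpha_nth alpha_nth add_divide_distrib
          sum_divide_distrib)
    finally show "(fps_deriv (alpha k) - alpha k) $ N
        = (alpha (k-1) + (\<Sum>u<k. alpha u * fps_deriv (alpha (k-1-u)))) $ N" .
  qed
  also have "(\<Sum>u<k. alpha u * fps_deriv (alpha (k-1-u)))
      = (\<Sum>u<k. fps_deriv (alpha u) * alpha (k-1-u))"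
    by (subst sum.nat_diff_reindex[symmetric]) (auto intro!: sum.cong simp: mult.commute)
  finally show ?thesis .
qed

section \<open>Exponential polynomials\<close>

definition exp_poly_fps :: "'a::field_char_0 poly poly \<Rightarrow> 'a fps" where
  "exp_poly_fps Q = (\<Sum>i\<le>degree Q. fps_of_poly (coeff Q i) * fps_exp (of_nat i))"

lemma exp_poly_fps_conv_sum:
  assumes "degree Q \<le> n"
  shows "exp_poly_fps Q = (\<Sum>i\<le>n. fps_of_poly (coeff Q i) * fps_exp (of_nat i))"
  unfolding exp_poly_fps_def
  by (rule sum.mono_neutral_left) (use assms in \<open>auto simp: coeff_eq_0\<close>)

lemma exp_poly_fps_eq_poly: "exp_poly_fps Q = poly (map_poly fps_of_poly Q) (fps_exp 1)"
proof -
  have d: "degree (map_poly fps_of_poly Q) = degree Q"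
    by (rule degree_map_poly) (simp add: fps_of_poly_eq_iff[of _ 0, simplified])
  show ?thesis
    unfolding exp_poly_fps_def poly_altdef d
    by (intro sum.cong refl) (simp add: coeff_map_poly fps_exp_power_mult)
qed

lemma map_poly_fps_of_poly_mult:
  fixes Q R :: "'a::field_char_0 poly poly"
  shows "map_poly fps_of_poly (Q * R) = map_poly fps_of_poly Q * map_poly fps_of_poly R"
  by (rule poly_eqI) (simp add: coeff_map_poly coeff_mult fps_of_poly_sum fps_of_poly_mult)

lemma map_poly_fps_of_poly_add:
  fixes Q R :: "'a::field_char_0 poly poly"
  shows "map_poly fps_of_poly (Q + R) = map_poly fps_of_poly Q + map_poly fps_of_poly R"
  by (rule poly_eqI) (simp add: coeff_map_poly fps_of_poly_add)

lemma exp_poly_fps_mult: "exp_poly_fps (Q * R) = exp_poly_fps Q * exp_poly_fps R"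
  unfolding exp_poly_fps_eq_poly map_poly_fps_of_poly_mult by simp

lemma exp_poly_fps_add: "exp_poly_fps (Q + R) = exp_poly_fps Q + exp_poly_fps R"
  unfolding exp_poly_fps_eq_poly map_poly_fps_of_poly_add by simp

lemma exp_poly_fps_0 [simp]: "exp_poly_fps 0 = 0"
  by (simp add: exp_poly_fps_def)

lemma exp_poly_fps_sum: "exp_poly_fps (sum f A) = (\<Sum>x\<in>A. exp_poly_fps (f x))"
  by (induction A rule: infinite_finite_induct) (simp_all add: exp_poly_fps_add)

lemma exp_poly_fps_diff: "exp_poly_fps (Q - R) = exp_poly_fps Q - exp_poly_fps R"
  using exp_poly_fps_add[of "Q - R" R] by (simp add: eq_diff_eq)

definition exp_poly_deriv :: "'a::field_char_0 poly poly \<Rightarrow> 'a poly poly" where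
  "exp_poly_deriv Q = map_poly pderiv Q + pCons 0 (pderiv Q)"

lemma coeff_exp_poly_deriv:
  "coeff (exp_poly_deriv Q) i = pderiv (coeff Q i) + smult (of_nat i) (coeff Q i)"
proof (cases i)
  case 0 then show ?thesis by (simp add: exp_poly_deriv_def coeff_map_poly)
next
  case (Suc j)
  then show ?thesis
    by (simp add: exp_poly_deriv_def coeff_map_poly coeff_pderiv of_nat_poly del: of_nat_Suc)
qed

lemma degree_exp_poly_deriv_le: "degree (exp_poly_deriv Q) \<le> degree Q"
proof -
  have "coeff (exp_poly_deriv Q) i = 0" if "i > degree Q" for i
    using that by (simp add: coeff_exp_poly_deriv coeff_eq_0)
  then show ?thesis by (intro degree_le) auto
qed

lemma degree_coeff_exp_poly_deriv_le: "degree (coeff (exp_poly_deriv Q) i) \<le> degree (coeff Q i)"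
proof -
  have "degree (pderiv (coeff Q i)) \<le> degree (coeff Q i)"
    by (simp add: degree_pderiv)
  then show ?thesis
    unfolding coeff_exp_poly_deriv by (meson degree_add_le degree_smult_le order_trans)
qed

lemma fps_deriv_exp_poly_fps: "fps_deriv (exp_poly_fps Q) = exp_poly_fps (exp_poly_deriv Q)"
proof -
  have "fps_deriv (exp_poly_fps Q)
      = (\<Sum>i\<le>degree Q. fps_deriv (fps_of_poly (coeff Q i) * fps_exp (of_nat i)))"
    unfolding exp_poly_fps_def by (simp add: fps_deriv_sum)
  also have "\<dots> = (\<Sum>i\<le>degree Q. fps_of_poly (coeff (exp_poly_deriv Q) i) * fps_exp (of_nat i))"
    by (intro sum.cong refl)
       (simp add: coeff_exp_poly_deriv fps_of_poly_add fps_of_poly_pderiv fps_of_poly_smult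
          algebra_simps)
  also have "\<dots> = exp_poly_fps (exp_poly_deriv Q)"
    by (rule exp_poly_fps_conv_sum[symmetric]) (rule degree_exp_poly_deriv_le)
  finally show ?thesis .
qed

lemma exp_poly_fps_monom_1: "exp_poly_fps (monom c 1) = fps_of_poly c * fps_exp 1"
  by (rule trans[OF exp_poly_fps_conv_sum[of _ 1]]) (auto simp: degree_monom_le)

lemma fps_eq_if_deriv_minus_self_eq:
  fixes f g :: "'a::field_char_0 fps"
  assumes "fps_deriv f - f = fps_deriv g - g" "f $ 0 = g $ 0"
  shows "f = g"
proof -
  define h where "h = f - g"
  have h: "fps_deriv h = h"
    using assms(1) unfolding h_def by (simp add: algebra_simps)
  have "h $ n = 0" for n
  proof (induction n)
    case 0
    then show ?case using assms(2) by (simp add: h_def)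
  next
    case (Suc n)
    have "fps_deriv h $ n = h $ n" using h by simp
    then have "of_nat (Suc n) * h $ Suc n = 0" using Suc by simp
    then show ?case by (simp del: of_nat_Suc)
  qed
  then have "h = 0" by (simp add: fps_eq_iff)
  then show ?thesis by (simp add: h_def)
qed

section \<open>Solving \<open>y' - y = r\<close> among exponential polynomials\<close>

text \<open>On polynomials (D + c)^-1 = sum_i (-D)^i / c^(i+1) for D = d/dz, a finite sum since D is
  nilpotent.\<close>

definition linear_ode_sol :: "'a::field \<Rightarrow> 'a poly \<Rightarrow> 'a poly" where
  "linear_ode_sol c r = (\<Sum>i\<le>degree r. smult ((-1)^i / c^(i+1)) ((pderiv^^i) r))"

lemma higher_pderiv_Suc_degree: "(pderiv^^(Suc (degree r))) r = 0"
  by (rule poly_eqI) (simp add: coeff_higher_pderiv coeff_eq_0 del: funpow.simps)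

lemma pderiv_linear_ode_sol:
  assumes "c \<noteq> 0"
  shows "pderiv (linear_ode_sol c r) + smult c (linear_ode_sol c r) = r"
proof -
  define t where "t i = smult ((-1)^i / c^i) ((pderiv^^i) r)" for i
  have "pderiv (linear_ode_sol c r) + smult c (linear_ode_sol c r)
      = (\<Sum>i<Suc (degree r). t i - t (Suc i))"
    unfolding linear_ode_sol_def pderiv_sum smult_sum_right sum.distrib[symmetric]
      lessThan_Suc_atMost
  proof (intro sum.cong refl)
    fix i
    show "pderiv (smult ((-1)^i / c^(i+1)) ((pderiv^^i) r))
        + smult c (smult ((-1)^i / c^(i+1)) ((pderiv^^i) r)) = t i - t (Suc i)"
      using assms unfolding t_def
      by (simp add: pderiv_smult smult_diff_left[symmetric] power_Suc smult_add_left[symmetric]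
          field_simps del: smult_add_left)
  qed
  also have "\<dots> = t 0 - t (Suc (degree r))"
    by (rule sum_lessThan_telescope')
  also have "\<dots> = r"
    unfolding t_def by (simp add: higher_pderiv_Suc_degree del: funpow.simps)
  finally show ?thesis .
qed

lemma linear_ode_sol_const: "linear_ode_sol c [:x:] = [:x / c:]"
  by (simp add: linear_ode_sol_def)

lemma degree_linear_ode_sol_le: "degree (linear_ode_sol c r) \<le> degree r"
  by (rule degree_le) (auto simp: linear_ode_sol_def coeff_sum coeff_higher_pderiv coeff_eq_0)

lemma coeff_linear_ode_sol_top:
  assumes "degree r \<le> d"
  shows "coeff (linear_ode_sol c r) d = coeff r d / c"
proof -
  have "coeff (linear_ode_sol c r) d = (\<Sum>i\<le>degree r. (-1)^i / c^(i+1) * coeff ((pderiv^^i) r) d)"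
    by (simp add: linear_ode_sol_def coeff_sum)
  also have "\<dots> = (\<Sum>i\<in>{0}. (-1)^i / c^(i+1) * coeff ((pderiv^^i) r) d)"
    by (rule sum.mono_neutral_right) (use assms in \<open>auto simp: coeff_higher_pderiv coeff_eq_0\<close>)
  finally show ?thesis by simp
qed

definition poly_antideriv :: "'a::field_char_0 poly \<Rightarrow> 'a poly" where
  "poly_antideriv r = (\<Sum>i\<le>degree r. monom (coeff r i / of_nat (Suc i)) (Suc i))"

lemma pderiv_poly_antideriv: "pderiv (poly_antideriv r) = r"
proof -
  have "pderiv (poly_antideriv r) = (\<Sum>i\<le>degree r. monom (coeff r i) i)"
    unfolding poly_antideriv_def pderiv_sum
    by (intro sum.cong refl) (simp add: pderiv_monom del: of_nat_Suc)
  then show ?thesis by (simp add: poly_as_sum_of_monoms)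
qed

lemma coeff_poly_antideriv_Suc: "coeff (poly_antideriv r) (Suc n) = coeff r n / of_nat (Suc n)"
proof (cases "n \<le> degree r")
  case True
  then show ?thesis unfolding poly_antideriv_def coeff_sum by (simp add: sum.delta)
next
  case False
  then show ?thesis unfolding poly_antideriv_def coeff_sum by (simp add: coeff_eq_0)
qed

lemma degree_poly_antideriv_le: "degree (poly_antideriv r) \<le> Suc (degree r)"
proof (rule degree_le, intro allI impI)
  fix i assume "Suc (degree r) < i"
  then obtain n where "i = Suc n" "n > degree r" by (cases i) auto
  then show "coeff (poly_antideriv r) i = 0" by (simp add: coeff_poly_antideriv_Suc coeff_eq_0)
qed

definition component_sol :: "nat \<Rightarrow> 'a::field_char_0 poly \<Rightarrow> 'a poly" where
  "component_sol j r = (if j = 1 then poly_antideriv r else linear_ode_sol (of_nat j - 1) r)"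

lemma component_sol_0 [simp]: "component_sol j 0 = 0"
  by (simp add: component_sol_def linear_ode_sol_def poly_antideriv_def)

lemma pderiv_component_sol:
  "pderiv (component_sol j r) + smult (of_nat j - 1) (component_sol j r) = r"
proof (cases "j = 1")
  case True
  then show ?thesis by (simp add: component_sol_def pderiv_poly_antideriv)
next
  case False
  then have "(of_nat j - 1 :: 'a) \<noteq> 0" by simp
  then show ?thesis using False by (simp add: component_sol_def pderiv_linear_ode_sol)
qed

definition exp_poly_ode_sol0 :: "'a::field_char_0 poly poly \<Rightarrow> 'a poly poly" where
  "exp_poly_ode_sol0 R = Poly (map (\<lambda>j. component_sol j (coeff R j)) [0..<Suc (degree R)])"

lemma coeff_exp_poly_ode_sol0: "coeff (exp_poly_ode_sol0 R) j = component_sol j (coeff R j)"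
proof (cases "j \<le> degree R")
  case True
  then show ?thesis by (simp add: exp_poly_ode_sol0_def nth_default_def del: upt_Suc)
next
  case False
  then show ?thesis by (simp add: exp_poly_ode_sol0_def nth_default_def coeff_eq_0)
qed

text \<open>The kernel of y \<mapsto> y' - y is spanned by e^z; adding a constant to the coefficient of e^z
  normalises the constant term to 0.\<close>

definition exp_poly_ode_sol :: "'a::field_char_0 poly poly \<Rightarrow> 'a poly poly" where
  "exp_poly_ode_sol R =
     exp_poly_ode_sol0 R + monom [:- (exp_poly_fps (exp_poly_ode_sol0 R) $ 0):] 1"

lemma coeff_exp_poly_ode_sol:
  "coeff (exp_poly_ode_sol R) j
     = component_sol j (coeff R j)
       + (if j = 1 then [:- (exp_poly_fps (exp_poly_ode_sol0 R) $ 0):] else 0)"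
  by (simp add: exp_poly_ode_sol_def coeff_exp_poly_ode_sol0)

lemma exp_poly_ode_sol_solves:
  "fps_deriv (exp_poly_fps (exp_poly_ode_sol R)) - exp_poly_fps (exp_poly_ode_sol R)
     = exp_poly_fps R"
proof -
  have "exp_poly_deriv (exp_poly_ode_sol R) - exp_poly_ode_sol R = R"
  proof (rule poly_eqI)
    fix j
    define y where "y = component_sol j (coeff R j)"
    define C where "C = - (exp_poly_fps (exp_poly_ode_sol0 R) $ 0)"
    have cY: "coeff (exp_poly_ode_sol R) j = y + (if j = 1 then [:C:] else 0)"
      unfolding y_def C_def by (rule coeff_exp_poly_ode_sol)
    have "coeff (exp_poly_deriv (exp_poly_ode_sol R) - exp_poly_ode_sol R) j
        = pderiv y + smult (of_nat j - 1) y
          + (if j = 1 then pderiv [:C:] + smult (of_nat j - 1) [:C:] else 0)"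
      unfolding coeff_diff coeff_exp_poly_deriv cY
      by (auto simp: pderiv_add smult_add_right smult_diff_left algebra_simps)
    also have "\<dots> = coeff R j"
      unfolding y_def pderiv_component_sol by simp
    finally show "coeff (exp_poly_deriv (exp_poly_ode_sol R) - exp_poly_ode_sol R) j = coeff R j" .
  qed
  then show ?thesis by (metis fps_deriv_exp_poly_fps exp_poly_fps_diff)
qed

lemma exp_poly_ode_sol_nth_0: "exp_poly_fps (exp_poly_ode_sol R) $ 0 = 0"
  unfolding exp_poly_ode_sol_def exp_poly_fps_add exp_poly_fps_monom_1 by simp

section \<open>Degree and sign of the top coefficient\<close>

definition weak_signed_top :: "nat \<Rightarrow> 'a \<Rightarrow> 'a::linordered_idom poly \<Rightarrow> bool" where
  "weak_signed_top d s p \<longleftrightarrow> degree p \<le> d \<and> 0 \<le> s * coeff p d"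

definition signed_top :: "nat \<Rightarrow> 'a \<Rightarrow> 'a::linordered_idom poly \<Rightarrow> bool" where
  "signed_top d s p \<longleftrightarrow> degree p \<le> d \<and> 0 < s * coeff p d"

lemma weak_signed_top_if_signed_top: "signed_top d s p \<Longrightarrow> weak_signed_top d s p"
  by (simp add: signed_top_def weak_signed_top_def)

lemma degree_eq_if_signed_top: "signed_top d s p \<Longrightarrow> degree p = d"
  unfolding signed_top_def by (metis le_antisym le_degree mult_zero_right order_less_irrefl)

lemma lead_coeff_sign_if_signed_top: "signed_top d s p \<Longrightarrow> 0 < s * lead_coeff p"
  using degree_eq_if_signed_top by (fastforce simp: signed_top_def)

lemma weak_signed_top_if_degree_less: "degree p < d \<Longrightarrow> weak_signed_top d s p"
  by (simp add: weak_signed_top_def coeff_eq_0)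

lemma weak_signed_top_0 [simp]: "weak_signed_top d s 0"
  by (simp add: weak_signed_top_def)

lemma weak_signed_top_add:
  "weak_signed_top d s p \<Longrightarrow> weak_signed_top d s q \<Longrightarrow> weak_signed_top d s (p + q)"
  by (auto simp: weak_signed_top_def degree_add_le distrib_left)

lemma signed_top_add:
  "signed_top d s p \<Longrightarrow> weak_signed_top d s q \<Longrightarrow> signed_top d s (p + q)"
  by (auto simp: weak_signed_top_def signed_top_def degree_add_le distrib_left)

lemma weak_signed_top_sum:
  "finite A \<Longrightarrow> (\<And>x. x \<in> A \<Longrightarrow> weak_signed_top d s (f x)) \<Longrightarrow> weak_signed_top d s (sum f A)"
  by (induction A rule: finite_induct) (auto intro: weak_signed_top_add)

lemma signed_top_sum:
  assumes "finite A" "\<And>x. x \<in> A \<Longrightarrow> weak_signed_top d s (f x)" "x \<in> A" "signed_top d s (f x)"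
  shows "signed_top d s (sum f A)"
proof -
  have "sum f A = f x + sum f (A - {x})"
    using assms by (simp add: sum.remove)
  moreover have "weak_signed_top d s (sum f (A - {x}))"
    using assms by (intro weak_signed_top_sum) auto
  ultimately show ?thesis
    using signed_top_add assms by simp
qed

lemma coeff_mult_at_degree_bounds:
  fixes p q :: "'a::idom poly"
  assumes "degree p \<le> d1" "degree q \<le> d2"
  shows "coeff (p * q) (d1 + d2) = coeff p d1 * coeff q d2"
proof (cases "degree p = d1 \<and> degree q = d2")
  case True
  then show ?thesis using coeff_mult_degree_sum[of p q] by simp
next
  case False
  then have "degree p < d1 \<or> degree q < d2"
    using assms by auto
  then have "coeff p d1 * coeff q d2 = 0" and "degree (p * q) < d1 + d2"
    using degree_mult_le[of p q] assms by (auto simp: coeff_eq_0)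
  then show ?thesis by (simp add: coeff_eq_0)
qed

lemma signed_top_mult:
  assumes "signed_top d1 s1 p" "signed_top d2 s2 q"
  shows "signed_top (d1 + d2) (s1 * s2) (p * q)"
proof -
  have deg: "degree p \<le> d1" "degree q \<le> d2"
    using assms by (auto simp: signed_top_def)
  then have "s1 * s2 * coeff (p * q) (d1 + d2) = (s1 * coeff p d1) * (s2 * coeff q d2)"
    by (simp add: coeff_mult_at_degree_bounds algebra_simps)
  also have "0 < (s1 * coeff p d1) * (s2 * coeff q d2)"
    by (rule mult_pos_pos) (use assms in \<open>simp_all add: signed_top_def\<close>)
  finally show ?thesis
    using deg degree_mult_le[of p q] by (simp add: signed_top_def)
qed

lemma signed_top_smult: "c > 0 \<Longrightarrow> signed_top d s p \<Longrightarrow> signed_top d s (smult c p)"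
  by (auto simp: signed_top_def mult.left_commute[of s c] intro: order.trans[OF degree_smult_le])

lemma weak_signed_top_pderiv:
  fixes p :: "'a::linordered_idom poly"
  shows "degree p \<le> d \<Longrightarrow> weak_signed_top d s (pderiv p)"
  unfolding weak_signed_top_def by (auto simp: coeff_pderiv coeff_eq_0 degree_pderiv)

lemma signed_top_pderiv_add_smult:
  fixes q :: "'a::linordered_idom poly"
  assumes "signed_top d s q" "j \<ge> 1"
  shows "signed_top d s (pderiv q + smult (of_nat j) q)"
proof -
  have "signed_top d s (smult (of_nat j) q + pderiv q)"
    using assms
    by (intro signed_top_add signed_top_smult weak_signed_top_pderiv) (auto simp: signed_top_def)
  then show ?thesis by (simp add: add.commute)
qed

lemma signed_top_linear_ode_sol:
  fixes r :: "'a::linordered_field poly"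
  assumes "c > 0" "signed_top d s r"
  shows "signed_top d s (linear_ode_sol c r)"
proof -
  have "degree r \<le> d"
    using assms by (simp add: signed_top_def)
  then show ?thesis
    using assms degree_linear_ode_sol_le[of c r]
    by (simp add: signed_top_def coeff_linear_ode_sol_top)
qed

lemma signed_top_poly_antideriv_add_const:
  fixes r :: "'a::linordered_field poly"
  assumes "signed_top d s r"
  shows "signed_top (Suc d) s (poly_antideriv r + [:x:])"
proof -
  have "degree (poly_antideriv r + [:x:]) \<le> Suc d"
    using degree_poly_antideriv_le[of r] assms by (intro degree_add_le) (auto simp: signed_top_def)
  moreover have "coeff (poly_antideriv r + [:x:]) (Suc d) = coeff r d / of_nat (Suc d)"
    by (simp add: coeff_poly_antideriv_Suc)
  ultimately show ?thesis
    using assms unfolding signed_top_def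
    by (simp add: zero_less_mult_iff zero_less_divide_iff del: of_nat_Suc)
qed

section \<open>The shape of \<open>\<alpha>\<^sub>k\<close>\<close>

text \<open>The polynomial p_m of the theorem is (-1)^m times the coefficient of e^((k+1-m)z), that is
  (-1)^m coeff Q (k+1-m).\<close>

definition alpha_repr :: "nat \<Rightarrow> rat poly poly \<Rightarrow> bool" where
  "alpha_repr k Q \<longleftrightarrow> alpha k = exp_poly_fps Q \<and> degree Q \<le> k + 1 \<and>
     coeff Q 0 = (if k = 0 then [:-1,-1:] else 0) \<and> coeff Q (k+1) = [:exp_top_coeff k:] \<and>
     (\<forall>j\<in>{1..k}. signed_top (2*(k+1-j)) ((-1)^(k+1-j)) (coeff Q j))"

lemma alpha_repr_coeff_eq_0: "alpha_repr u Q \<Longrightarrow> u + 1 < j \<Longrightarrow> coeff Q j = 0"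
  unfolding alpha_repr_def by (simp add: coeff_eq_0)

lemma alpha_repr_signed_top:
  assumes "alpha_repr u Q" "1 \<le> j" "j \<le> u + 1"
  shows "signed_top (2*(u+1-j)) ((-1)^(u+1-j)) (coeff Q j)"
  using assms exp_top_coeff_pos[of u]
  by (cases "j = u + 1") (simp_all add: alpha_repr_def signed_top_def)

lemma alpha_repr_degree_coeff:
  assumes "alpha_repr u Q" "1 \<le> j"
  shows "degree (coeff Q j) \<le> 2*(u+1-j)"
  using assms alpha_repr_signed_top[OF assms] alpha_repr_coeff_eq_0[OF assms(1)]
  by (cases "j \<le> u + 1") (simp_all add: signed_top_def)

lemma alpha_repr_degree_coeff_0: "alpha_repr u Q \<Longrightarrow> degree (coeff Q 0) \<le> 1"
  unfolding alpha_repr_def by auto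

lemma alpha_repr_coeff_0_eq_0: "alpha_repr u Q \<Longrightarrow> u \<ge> 1 \<Longrightarrow> coeff Q 0 = 0"
  unfolding alpha_repr_def by auto

lemma alpha_repr_coeff_deriv_eq_0:
  "alpha_repr u Q \<Longrightarrow> u + 1 < j \<Longrightarrow> coeff (exp_poly_deriv Q) j = 0"
  by (simp add: coeff_exp_poly_deriv alpha_repr_coeff_eq_0)

lemma alpha_repr_signed_top_deriv:
  "alpha_repr u Q \<Longrightarrow> 1 \<le> j \<Longrightarrow> j \<le> u + 1 \<Longrightarrow>
     signed_top (2*(u+1-j)) ((-1)^(u+1-j)) (coeff (exp_poly_deriv Q) j)"
  unfolding coeff_exp_poly_deriv by (intro signed_top_pderiv_add_smult alpha_repr_signed_top) auto

lemma alpha_repr_degree_coeff_deriv: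
  "alpha_repr u Q \<Longrightarrow> 1 \<le> j \<Longrightarrow> degree (coeff (exp_poly_deriv Q) j) \<le> 2*(u+1-j)"
  using degree_coeff_exp_poly_deriv_le alpha_repr_degree_coeff order_trans by blast

lemma alpha_repr_0: "alpha_repr 0 [:[:-1, -1:], 1:]"
proof -
  have "exp_poly_fps [:[:-1, -1:], 1:] = fps_of_poly [:-1, -1:] + fps_exp 1"
    unfolding exp_poly_fps_def by simp
  also have "\<dots> = alpha 0"
    unfolding alpha_0 by (auto simp: fps_eq_iff fps_X_nth coeff_pCons split: nat.split)
  finally show ?thesis
    unfolding alpha_repr_def by (simp add: exp_top_coeff_def)
qed

context
  fixes k :: nat and Qf :: "nat \<Rightarrow> rat poly poly"
  assumes k: "k \<ge> 1" and IH: "\<And>u. u < k \<Longrightarrow> alpha_repr u (Qf u)"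
begin

definition rhs :: "rat poly poly" where
  "rhs = Qf (k-1) + (\<Sum>u<k. exp_poly_deriv (Qf u) * Qf (k-1-u))"

definition rhs_term :: "nat \<Rightarrow> nat \<Rightarrow> nat \<Rightarrow> rat poly" where
  "rhs_term u i j = coeff (exp_poly_deriv (Qf u)) i * coeff (Qf (k-1-u)) (j-i)"

lemma coeff_rhs: "coeff rhs j = coeff (Qf (k-1)) j + (\<Sum>u<k. \<Sum>i\<le>j. rhs_term u i j)"
  unfolding rhs_def rhs_term_def by (simp add: coeff_sum coeff_mult)

lemma exp_poly_fps_rhs:
  "exp_poly_fps rhs = alpha (k-1) + (\<Sum>u<k. fps_deriv (alpha u) * alpha (k-1-u))"
proof -
  have alpha: "alpha u = exp_poly_fps (Qf u)" if "u < k" for u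
    using IH[OF that] by (simp add: alpha_repr_def)
  have "exp_poly_fps rhs = exp_poly_fps (Qf (k-1))
      + (\<Sum>u<k. fps_deriv (exp_poly_fps (Qf u)) * exp_poly_fps (Qf (k-1-u)))"
    unfolding rhs_def exp_poly_fps_add exp_poly_fps_sum exp_poly_fps_mult fps_deriv_exp_poly_fps ..
  also have "\<dots> = alpha (k-1) + (\<Sum>u<k. fps_deriv (alpha u) * alpha (k-1-u))"
    using alpha k by (intro arg_cong2[where f="(+)"] sum.cong) auto
  finally show ?thesis .
qed

lemma alpha_eq_exp_poly_ode_sol: "alpha k = exp_poly_fps (exp_poly_ode_sol rhs)"
  by (rule fps_eq_if_deriv_minus_self_eq)
     (simp_all add: alpha_ode[OF k] exp_poly_fps_rhs exp_poly_ode_sol_solves alpha_nth_0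
        exp_poly_ode_sol_nth_0)

text \<open>A product of coefficients of positive indices i and j - i has the top degree 2(k+1-j) and
  the sign (-1)^(k+1-j), whatever i and u are; all other products have lower degree. Hence
  nothing cancels in coeff rhs j.\<close>

lemma rhs_term_signed_top:
  assumes u: "u < k" and i: "1 \<le> i" "i \<le> u + 1" "1 \<le> j - i" "j - i \<le> k - u" "i \<le> j"
  shows "signed_top (2*(k+1-j)) ((-1)^(k+1-j)) (rhs_term u i j)"
proof -
  have g1: "signed_top (2*(u+1-i)) ((-1)^(u+1-i)) (coeff (exp_poly_deriv (Qf u)) i)"
    using alpha_repr_signed_top_deriv[OF IH[OF u]] i by simp
  have g2: "signed_top (2*(k-1-u+1-(j-i))) ((-1)^(k-1-u+1-(j-i)))
      (coeff (Qf (k-1-u)) (j-i))"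
    using alpha_repr_signed_top[OF IH, of "k-1-u" "j-i"] u i by simp
  have e1: "2*(u+1-i) + 2*(k-1-u+1-(j-i)) = 2*(k+1-j)" using u i by simp
  have e2: "(-1::rat)^(u+1-i) * (-1)^(k-1-u+1-(j-i)) = (-1)^(k+1-j)"
    unfolding power_add[symmetric] using u i by (simp add: algebra_simps)
  show ?thesis using signed_top_mult[OF g1 g2] unfolding e1 e2 rhs_term_def .
qed

lemma rhs_term_0_weak_signed_top:
  assumes u: "u < k" and j: "2 \<le> j" "j \<le> k"
  shows "weak_signed_top (2*(k+1-j)) ((-1)^(k+1-j)) (rhs_term u 0 j)"
proof (rule weak_signed_top_if_degree_less)
  have "degree (coeff (exp_poly_deriv (Qf u)) 0) \<le> 0"
    using alpha_repr_degree_coeff_0[OF IH[OF u]] by (simp add: coeff_exp_poly_deriv degree_pderiv)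
  moreover have "degree (coeff (Qf (k-1-u)) j) \<le> 2*(k-j)"
    using alpha_repr_degree_coeff[OF IH, of "k-1-u" j] j u by simp
  ultimately show "degree (rhs_term u 0 j) < 2*(k+1-j)"
    unfolding rhs_term_def
    using degree_mult_le[of "coeff (exp_poly_deriv (Qf u)) 0" "coeff (Qf (k-1-u)) j"] j by simp
qed

lemma rhs_term_diag_weak_signed_top:
  assumes u: "u < k" and j: "2 \<le> j" "j \<le> k"
  shows "weak_signed_top (2*(k+1-j)) ((-1)^(k+1-j)) (rhs_term u j j)"
proof (cases "j \<le> u + 1")
  case False
  then have "coeff (exp_poly_deriv (Qf u)) j = 0"
    using alpha_repr_coeff_deriv_eq_0[OF IH[OF u]] by simp
  then show ?thesis unfolding rhs_term_def by simp
next
  case True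
  have "degree (coeff (exp_poly_deriv (Qf u)) j) \<le> 2*(u+1-j)"
    using alpha_repr_degree_coeff_deriv[OF IH[OF u]] j by simp
  moreover have "degree (coeff (Qf (k-1-u)) 0) \<le> 1"
    using alpha_repr_degree_coeff_0[OF IH] u by simp
  ultimately have "degree (rhs_term u j j) < 2*(k+1-j)"
    unfolding rhs_term_def
    using degree_mult_le[of "coeff (exp_poly_deriv (Qf u)) j" "coeff (Qf (k-1-u)) 0"] j u True
    by simp
  then show ?thesis by (rule weak_signed_top_if_degree_less)
qed

lemma rhs_term_weak_signed_top:
  assumes u: "u < k" and j: "2 \<le> j" "j \<le> k" and i: "i \<le> j"
  shows "weak_signed_top (2*(k+1-j)) ((-1)^(k+1-j)) (rhs_term u i j)"
proof -
  consider "i = 0" | "i = j" | "1 \<le> i" "i < j" using i by linarith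
  then show ?thesis
  proof cases
    case 1
    then show ?thesis using rhs_term_0_weak_signed_top[OF u j] by simp
  next
    case 2
    then show ?thesis using rhs_term_diag_weak_signed_top[OF u j] by simp
  next
    case 3
    show ?thesis
    proof (cases "i \<le> u + 1 \<and> j - i \<le> k - u")
      case True
      then show ?thesis
        using rhs_term_signed_top[OF u] 3 by (intro weak_signed_top_if_signed_top) simp
    next
      case False
      then have "coeff (exp_poly_deriv (Qf u)) i = 0 \<or> coeff (Qf (k-1-u)) (j - i) = 0"
        using alpha_repr_coeff_deriv_eq_0[OF IH[OF u]] alpha_repr_coeff_eq_0[OF IH, of "k-1-u"] u
        by auto
      then show ?thesis unfolding rhs_term_def by auto
    qed
  qed
qed

lemma coeff_rhs_signed_top:
  assumes j: "2 \<le> j" "j \<le> k"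
  shows "signed_top (2*(k+1-j)) ((-1)^(k+1-j)) (coeff rhs j)"
proof -
  have prev: "weak_signed_top (2*(k+1-j)) ((-1)^(k+1-j)) (coeff (Qf (k-1)) j)"
  proof (rule weak_signed_top_if_degree_less)
    have "degree (coeff (Qf (k-1)) j) \<le> 2*(k-1+1-j)"
      using alpha_repr_degree_coeff[OF IH, of "k-1" j] k j by simp
    then show "degree (coeff (Qf (k-1)) j) < 2*(k+1-j)" using j k by simp
  qed
  have inner: "signed_top (2*(k+1-j)) ((-1)^(k+1-j)) (\<Sum>i\<le>j. rhs_term (k-1) i j)"
  proof (rule signed_top_sum[where x="j-1"])
    show "weak_signed_top (2*(k+1-j)) ((-1)^(k+1-j)) (rhs_term (k-1) i j)" if "i \<in> {..j}" for i
      using rhs_term_weak_signed_top[of "k-1" j i] that j k by simp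
    show "signed_top (2*(k+1-j)) ((-1)^(k+1-j)) (rhs_term (k-1) (j-1) j)"
      using rhs_term_signed_top[of "k-1" "j-1" j] j k by simp
  qed (use j in auto)
  have "signed_top (2*(k+1-j)) ((-1)^(k+1-j)) (\<Sum>u<k. \<Sum>i\<le>j. rhs_term u i j)"
  proof (rule signed_top_sum[where x="k-1"])
    show "weak_signed_top (2*(k+1-j)) ((-1)^(k+1-j)) (\<Sum>i\<le>j. rhs_term u i j)"
      if "u \<in> {..<k}" for u
      using rhs_term_weak_signed_top[of u j] that j by (intro weak_signed_top_sum) auto
  qed (use k inner in auto)
  then have "signed_top (2*(k+1-j)) ((-1)^(k+1-j))
      ((\<Sum>u<k. \<Sum>i\<le>j. rhs_term u i j) + coeff (Qf (k-1)) j)"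
    using prev by (rule signed_top_add)
  then show ?thesis unfolding coeff_rhs by (simp add: add.commute)
qed

text \<open>At j = 1 the top degree is odd: it comes from the factor coeff (Qf 0) 0 = -1 - z, the
  polynomial part of alpha_0 = e^z - 1 - z.\<close>

lemma rhs_term_0_1_weak_signed_top:
  assumes u: "u < k"
  shows "weak_signed_top (2*k-1) ((-1)^k) (rhs_term u 0 1)"
proof (rule weak_signed_top_if_degree_less)
  have "degree (coeff (exp_poly_deriv (Qf u)) 0) \<le> 0"
    using alpha_repr_degree_coeff_0[OF IH[OF u]] by (simp add: coeff_exp_poly_deriv degree_pderiv)
  moreover have "degree (coeff (Qf (k-1-u)) 1) \<le> 2*(k-1-u+1-1)"
    using alpha_repr_degree_coeff[OF IH, of "k-1-u" 1] u by simp
  ultimately show "degree (rhs_term u 0 1) < 2*k-1"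
    unfolding rhs_term_def
    using degree_mult_le[of "coeff (exp_poly_deriv (Qf u)) 0" "coeff (Qf (k-1-u)) 1"] u k by simp
qed

lemma rhs_term_1_1_signed_top: "signed_top (2*k-1) ((-1)^k) (rhs_term (k-1) 1 1)"
proof -
  have g1: "signed_top (2*(k-1)) ((-1)^(k-1)) (coeff (exp_poly_deriv (Qf (k-1))) 1)"
    using alpha_repr_signed_top_deriv[OF IH, of "k-1" 1] k by simp
  have "coeff (Qf 0) 0 = [:-1, -1:]"
    using IH[of 0] k by (simp add: alpha_repr_def)
  then have g2: "signed_top 1 (-1) (coeff (Qf 0) 0)"
    by (simp add: signed_top_def)
  have e1: "2*(k-1) + 1 = 2*k-1"
    using k by simp
  have e2: "(-1::rat)^(k-1) * (-1) = (-1)^k"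
    using k by (cases k) auto
  show ?thesis
    using signed_top_mult[OF g1 g2] unfolding e1 e2 rhs_term_def using k by simp
qed

lemma coeff_rhs_1_signed_top: "signed_top (2*k-1) ((-1)^k) (coeff rhs 1)"
proof -
  have prev: "weak_signed_top (2*k-1) ((-1)^k) (coeff (Qf (k-1)) 1)"
  proof (rule weak_signed_top_if_degree_less)
    have "degree (coeff (Qf (k-1)) 1) \<le> 2*(k-1+1-1)"
      using alpha_repr_degree_coeff[OF IH, of "k-1" 1] k by simp
    then show "degree (coeff (Qf (k-1)) 1) < 2*k-1" using k by simp
  qed
  have term_1: "weak_signed_top (2*k-1) ((-1)^k) (rhs_term u 1 1)" if u: "u < k - 1" for u
  proof -
    have "coeff (Qf (k-1-u)) 0 = 0"
      using alpha_repr_coeff_0_eq_0[OF IH, of "k-1-u"] u by simp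
    then show ?thesis by (simp add: rhs_term_def)
  qed
  have inner: "signed_top (2*k-1) ((-1)^k) (\<Sum>i\<le>1. rhs_term (k-1) i 1)"
  proof -
    have "(\<Sum>i\<le>1. rhs_term (k-1) i 1) = rhs_term (k-1) 1 1 + rhs_term (k-1) 0 1"
      by simp
    moreover have "signed_top (2*k-1) ((-1)^k) (rhs_term (k-1) 1 1 + rhs_term (k-1) 0 1)"
      using rhs_term_1_1_signed_top rhs_term_0_1_weak_signed_top[of "k-1"] k
      by (intro signed_top_add) auto
    ultimately show ?thesis by (simp add: add.commute)
  qed
  have "signed_top (2*k-1) ((-1)^k) (\<Sum>u<k. \<Sum>i\<le>1. rhs_term u i 1)"
  proof (rule signed_top_sum[where x="k-1"])
    show "weak_signed_top (2*k-1) ((-1)^k) (\<Sum>i\<le>1. rhs_term u i 1)" if "u \<in> {..<k}" for u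
    proof (cases "u = k - 1")
      case True
      then show ?thesis using inner weak_signed_top_if_signed_top by simp
    next
      case False
      then have "u < k - 1"
        using that by auto
      then show ?thesis
        using rhs_term_0_1_weak_signed_top[of u] term_1[of u] that by (simp add: weak_signed_top_add)
    qed
  qed (use k inner in auto)
  then have "signed_top (2*k-1) ((-1)^k) ((\<Sum>u<k. \<Sum>i\<le>1. rhs_term u i 1) + coeff (Qf (k-1)) 1)"
    using prev by (rule signed_top_add)
  then show ?thesis unfolding coeff_rhs by (simp add: add.commute)
qed

lemma coeff_rhs_0: "coeff rhs 0 = 0"
proof (cases "k = 1")
  case True
  then have "coeff (Qf 0) 0 = [:-1, -1:]"
    using IH[of 0] by (simp add: alpha_repr_def)
  then show ?thesis
    unfolding coeff_rhs rhs_term_def using True by (simp add: coeff_exp_poly_deriv pderiv_pCons)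
next
  case False
  then have "k \<ge> 2"
    using k by simp
  then have "coeff (Qf u) 0 = 0" if "u < k" "u \<ge> 1" for u
    using alpha_repr_coeff_0_eq_0[OF IH] that by simp
  then have "rhs_term u 0 0 = 0" if "u < k" for u
    using that \<open>k \<ge> 2\<close> by (cases "u \<ge> 1") (simp_all add: rhs_term_def coeff_exp_poly_deriv)
  moreover have "coeff (Qf (k-1)) 0 = 0"
    using \<open>\<And>u. u < k \<Longrightarrow> u \<ge> 1 \<Longrightarrow> coeff (Qf u) 0 = 0\<close> \<open>k \<ge> 2\<close> by simp
  ultimately show ?thesis
    unfolding coeff_rhs by simp
qed

lemma coeff_rhs_top: "coeff rhs (k+1) = [:of_nat k * exp_top_coeff k:]"
proof -
  have prev: "coeff (Qf (k-1)) (k+1) = 0"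
    using alpha_repr_coeff_eq_0[OF IH, of "k-1" "k+1"] k by simp
  define c where "c u = [:of_nat (u+1) * exp_top_coeff u * exp_top_coeff (k-1-u):]" for u
  have top_term: "rhs_term u i (k+1) = (if i = u + 1 then c u else 0)"
    if u: "u < k" and i: "i \<le> k + 1" for u i
  proof (cases "i = u + 1")
    case True
    have "coeff (Qf u) (u+1) = [:exp_top_coeff u:]"
      using IH[OF u] by (simp add: alpha_repr_def)
    moreover have "coeff (Qf (k-1-u)) (k-1-u+1) = [:exp_top_coeff (k-1-u):]"
      using IH[of "k-1-u"] u by (simp add: alpha_repr_def)
    moreover have "k + 1 - i = k-1-u+1"
      using True u by simp
    ultimately show ?thesis
      unfolding rhs_term_def coeff_exp_poly_deriv c_def using True
      by (simp add: of_nat_poly algebra_simps del: of_nat_Suc)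
  next
    case False
    then have "coeff (exp_poly_deriv (Qf u)) i = 0 \<or> coeff (Qf (k-1-u)) (k+1-i) = 0"
      using alpha_repr_coeff_deriv_eq_0[OF IH[OF u], of i]
        alpha_repr_coeff_eq_0[OF IH, of "k-1-u" "k+1-i"] u i by (cases "i > u + 1") simp_all
    then show ?thesis
      using False by (auto simp: rhs_term_def)
  qed
  have "(\<Sum>u<k. \<Sum>i\<le>k+1. rhs_term u i (k+1)) = (\<Sum>u<k. c u)"
    using top_term by (intro sum.cong) (simp_all add: sum.delta)
  also have "\<dots> = [:of_nat k * exp_top_coeff k:]"
    unfolding c_def sum_to_poly exp_top_coeff_convolution[OF k] ..
  finally show ?thesis
    unfolding coeff_rhs prev by simp
qed

lemma coeff_rhs_eq_0:
  assumes "j > k + 1"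
  shows "coeff rhs j = 0"
proof -
  have "rhs_term u i j = 0" if u: "u < k" and i: "i \<le> j" for u i
  proof -
    have "coeff (exp_poly_deriv (Qf u)) i = 0 \<or> coeff (Qf (k-1-u)) (j-i) = 0"
      using alpha_repr_coeff_deriv_eq_0[OF IH[OF u], of i]
        alpha_repr_coeff_eq_0[OF IH, of "k-1-u" "j-i"] u assms by (cases "i > u + 1") simp_all
    then show ?thesis
      by (auto simp: rhs_term_def)
  qed
  moreover have "coeff (Qf (k-1)) j = 0"
    using alpha_repr_coeff_eq_0[OF IH, of "k-1" j] k assms by simp
  ultimately show ?thesis
    unfolding coeff_rhs by simp
qed

lemma alpha_repr_step: "alpha_repr k (exp_poly_ode_sol rhs)"
proof -
  define C where "C = - (exp_poly_fps (exp_poly_ode_sol0 rhs) $ 0)"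
  have coeff_sol: "coeff (exp_poly_ode_sol rhs) j
      = component_sol j (coeff rhs j) + (if j = 1 then [:C:] else 0)" for j
    unfolding C_def by (rule coeff_exp_poly_ode_sol)
  have "degree (exp_poly_ode_sol rhs) \<le> k + 1"
    by (rule degree_le) (auto simp: coeff_sol coeff_rhs_eq_0)
  moreover have "coeff (exp_poly_ode_sol rhs) 0 = 0"
    unfolding coeff_sol coeff_rhs_0 by simp
  moreover have "coeff (exp_poly_ode_sol rhs) (k+1) = [:exp_top_coeff k:]"
    using k unfolding coeff_sol coeff_rhs_top by (simp add: component_sol_def linear_ode_sol_const)
  moreover have "signed_top (2*(k+1-j)) ((-1)^(k+1-j)) (coeff (exp_poly_ode_sol rhs) j)"
    if j: "j \<in> {1..k}" for j
  proof (cases "j = 1")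
    case True
    have "signed_top (Suc (2*k-1)) ((-1)^k) (poly_antideriv (coeff rhs 1) + [:C:])"
      by (rule signed_top_poly_antideriv_add_const[OF coeff_rhs_1_signed_top])
    moreover have "Suc (2*k-1) = 2*(k+1-1)"
      using k by simp
    ultimately show ?thesis
      unfolding coeff_sol using True by (simp add: component_sol_def)
  next
    case False
    then have j2: "2 \<le> j" "j \<le> k"
      using j by auto
    have "(of_nat j - 1 :: rat) > 0"
      using j2 by simp
    then have "signed_top (2*(k+1-j)) ((-1)^(k+1-j)) (linear_ode_sol (of_nat j - 1) (coeff rhs j))"
      using coeff_rhs_signed_top[OF j2] by (rule signed_top_linear_ode_sol)
    then show ?thesis
      unfolding coeff_sol using False by (simp add: component_sol_def)
  qed
  ultimately show ?thesis
    unfolding alpha_repr_def using alpha_eq_exp_poly_ode_sol k by simp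
qed

end

lemma alpha_repr_exists: "\<exists>Q. alpha_repr k Q"
proof (induction k rule: less_induct)
  case (less k)
  show ?case
  proof (cases "k = 0")
    case True
    then show ?thesis using alpha_repr_0 by auto
  next
    case False
    obtain Qf where "\<forall>u<k. alpha_repr u (Qf u)"
      using less by metis
    then have "alpha_repr k (exp_poly_ode_sol (rhs k Qf))"
      using False by (intro alpha_repr_step) auto
    then show ?thesis by blast
  qed
qed

lemma alpha_repr_exp_form:
  assumes k: "k \<ge> 1" and Q: "alpha_repr k Q"
  shows "alpha k = fps_const (of_nat ((k + 1) ^ k) / fact (k + 1)) * fps_exp (of_nat (k + 1))
    + fps_exp 1 * (\<Sum>m = 1..k. (-1) ^ m * fps_of_poly (smult ((-1)^m) (coeff Q (k+1-m)))
        * fps_exp (of_nat (k - m)))"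
proof -
  define f where "f i = fps_of_poly (coeff Q i) * fps_exp (of_nat i :: rat)" for i
  have "alpha k = (\<Sum>i\<le>k+1. f i)"
    using Q exp_poly_fps_conv_sum[of Q "k+1"] by (simp add: alpha_repr_def f_def)
  also have "\<dots> = f (k+1) + f 0 + (\<Sum>i=1..k. f i)"
    by (simp add: atMost_atLeast0 sum.atLeast_Suc_atMost add.commute)
  also have "f 0 = 0"
    using Q k by (simp add: f_def alpha_repr_def)
  also have "f (k+1) = fps_const (of_nat ((k + 1) ^ k) / fact (k + 1)) * fps_exp (of_nat (k + 1))"
    using Q by (simp add: f_def alpha_repr_def exp_top_coeff_def fps_of_poly_const)
  also have "(\<Sum>i=1..k. f i) = (\<Sum>m=1..k. f (k+1-m))"
    by (rule sum.reindex_bij_witness[where i="\<lambda>m. k+1-m" and j="\<lambda>i. k+1-i"]) auto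
  also have "\<dots> = fps_exp 1 * (\<Sum>m = 1..k. (-1) ^ m * fps_of_poly (smult ((-1)^m) (coeff Q (k+1-m)))
      * fps_exp (of_nat (k - m)))"
    unfolding sum_distrib_left
  proof (rule sum.cong[OF refl])
    fix m assume m: "m \<in> {1..k}"
    have "fps_exp (of_nat (k+1-m) :: rat) = fps_exp 1 * fps_exp (of_nat (k-m))"
      using m by (simp add: fps_exp_add_mult[symmetric] of_nat_diff)
    moreover have "(-1::rat fps)^m * fps_of_poly (smult ((-1)^m) (coeff Q (k+1-m)))
        = fps_of_poly (coeff Q (k+1-m))"
      by (simp add: fps_of_poly_smult fps_const_power[symmetric] fps_const_neg[symmetric]
          power_mult_distrib[symmetric] mult.assoc[symmetric])
    ultimately show "f (k+1-m) = fps_exp 1 *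
        ((-1) ^ m * fps_of_poly (smult ((-1)^m) (coeff Q (k+1-m))) * fps_exp (of_nat (k - m)))"
      unfolding f_def by (simp add: ac_simps)
  qed
  finally show ?thesis
    by (simp add: add.commute)
qed

lemma alpha_repr_signed_top_rev:
  assumes "alpha_repr k Q" "m \<in> {1..k}"
  shows "signed_top (2*m) ((-1)^m) (coeff Q (k+1-m))"
proof -
  have "k+1-(k+1-m) = m"
    using assms(2) by simp
  then show ?thesis
    using alpha_repr_signed_top[OF assms(1), of "k+1-m"] assms(2) by auto
qed

theorem theorem4p1:
  shows "alpha 0 = fps_exp 1 - (fps_X + 1) \<and>
    (\<forall>k\<ge>1. \<exists>p :: nat \<Rightarrow> rat poly.
       alpha k = fps_const (of_nat ((k + 1) ^ k) / fact (k + 1)) * fps_exp (of_nat (k + 1))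
         + fps_exp 1 * (\<Sum>m = 1..k. (-1) ^ m * fps_of_poly (p m) * fps_exp (of_nat (k - m)))
       \<and> (\<forall>m\<in>{1..k}. degree (p m) = 2 * m \<and> lead_coeff (p m) > 0))"
proof (intro conjI allI impI)
  show "alpha 0 = fps_exp 1 - (fps_X + 1)"
    by (rule alpha_0)
  fix k :: nat
  assume k: "k \<ge> 1"
  obtain Q where Q: "alpha_repr k Q"
    using alpha_repr_exists by blast
  define p where "p m = smult ((-1)^m) (coeff Q (k+1-m))" for m
  have "degree (p m) = 2 * m \<and> lead_coeff (p m) > 0" if "m \<in> {1..k}" for m
    using degree_eq_if_signed_top[OF alpha_repr_signed_top_rev[OF Q that]]
      lead_coeff_sign_if_signed_top[OF alpha_repr_signed_top_rev[OF Q that]]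
    by (simp add: p_def)
  with alpha_repr_exp_form[OF k Q] show "\<exists>p :: nat \<Rightarrow> rat poly.
       alpha k = fps_const (of_nat ((k + 1) ^ k) / fact (k + 1)) * fps_exp (of_nat (k + 1))
         + fps_exp 1 * (\<Sum>m = 1..k. (-1) ^ m * fps_of_poly (p m) * fps_exp (of_nat (k - m)))
       \<and> (\<forall>m\<in>{1..k}. degree (p m) = 2 * m \<and> lead_coeff (p m) > 0)"
    unfolding p_def[symmetric] by blast
qed

end
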